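(* Let $P$ be a finite set of points in the plane such that no two points of $P$ lie on a line parallel to a boundary ray of the cones (i.e. to a line making angle a multiple of $\pi/3$ with the positive $x$-axis), and let $G$ be the half-$\theta_6$-graph of $P$. Let $u,w\in P$ with $w$ in a positive cone of $u$. Let $m$ be the midpoint of the side of the canonical triangle $T_{uw}$ opposite $u$, and let $\alpha$ be the unsigned angle between the segments $uw$ and $um$. Then there exists a path between $u$ and $w$ in $G$ of length at most $$(\sqrt{3}\cos\alpha+\sin\alpha)\cdot|uw|,$$ all of whose vertices lie in $T_{uw}$.
   Context: Cones: for a point $u$, the plane is partitioned into six cones with apex $u$, bounded by the rays from $u$ at angles $j\pi/3$ ($j=0,\dots,5$) from the positive $x$-axis. In counterclockwise order starting from the positive $x$-axis they are labelled $\overline{C}_1, C_0, \overline{C}_2, C_1, \overline{C}_0, C_2$; the cones $C_0,C_1,C_2$ are called positive and $\overline{C}_0,\overline{C}_1,\overline{C}_2$ negative. Half-$\theta_6$-graph: for each point $u\in P$ and each positive cone $C$ of $u$ containing points of $P\setminus\{u\}$, add an edge from $u$ to the point of $P$ in $C$ whose orthogonal projection onto the bisector of $C$ is closest to $u$; edges are straight segments weighted by Euclidean length $|\cdot|$. Canonical triangle: if $v$ lies in a positive cone $C$ of $u$, $T_{uv}$ is the triangle bounded by the two boundary rays of $C$ and the line through $v$ perpendicular to the bisector of $C$ (an equilateral triangle with apex $u$). For every pair of points exactly one of $T_{uv}$, $T_{vu}$ is defined, and $uv$ is an edge iff its canonical triangle contains no other point of $P$. The length of a path is the sum of the Euclidean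 lengths of its edges. *)

theory Defs
  imports "HOL-Analysis.Analysis"
begin

text \<open>Positive cone C_i (i = 0,1,2) of u has bisector direction bis i, at angle
  pi/2 + 2 pi i / 3, i.e. pi/2, 7pi/6, 11pi/6; it is the cone of half-angle pi/6
  around the bisector.\<close>

definition bis :: "nat \<Rightarrow> complex" where
  "bis i = cis (pi/2 + 2*pi*real i/3)"

text \<open>v lies in the (open) positive cone C_i of u: the angle between v - u and
  the bisector is less than pi/6.  (Under general position no point lies on a
  cone boundary, so open/closed does not matter.)\<close>
definition in_pos_cone :: "complex \<Rightarrow> nat \<Rightarrow> complex \<Rightarrow> bool" where
  "in_pos_cone u i v \<longleftrightarrow> i < 3 \<and> v \<noteq> u \<and>
     inner (v - u) (bis i) > (sqrt 3 / 2) * norm (v - u)"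

definition half_theta6_dedge :: "complex set \<Rightarrow> complex \<Rightarrow> complex \<Rightarrow> bool" where
  "half_theta6_dedge P u v \<longleftrightarrow> u \<in> P \<and> v \<in> P \<and>
     (\<exists>i<3. in_pos_cone u i v \<and>
        (\<forall>x\<in>P. in_pos_cone u i x \<longrightarrow> inner (v - u) (bis i) \<le> inner (x - u) (bis i)))"

definition half_theta6_edge :: "complex set \<Rightarrow> complex \<Rightarrow> complex \<Rightarrow> bool" where
  "half_theta6_edge P u v \<longleftrightarrow> half_theta6_dedge P u v \<or> half_theta6_dedge P v u"

definition canon_tri :: "complex \<Rightarrow> nat \<Rightarrow> complex \<Rightarrow> complex set" where
  "canon_tri u i v = {x. inner (x - u) (bis i) \<ge> (sqrt 3 / 2) * norm (x - u) \<and>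
                         inner (x - u) (bis i) \<le> inner (v - u) (bis i)}"

definition opp_mid :: "complex \<Rightarrow> nat \<Rightarrow> complex \<Rightarrow> complex" where
  "opp_mid u i v = u + of_real (inner (v - u) (bis i)) * bis i"

definition seg_angle :: "complex \<Rightarrow> complex \<Rightarrow> complex \<Rightarrow> real" where
  "seg_angle a b c = arccos (inner (b - a) (c - a) / (norm (b - a) * norm (c - a)))"

definition gen_pos :: "complex set \<Rightarrow> bool" where
  "gen_pos P \<longleftrightarrow> (\<forall>p\<in>P. \<forall>q\<in>P. p \<noteq> q \<longrightarrow>
      (\<forall>k::int. \<not> (\<exists>t::real. q - p = of_real t * cis (real_of_int k * pi / 3))))"

definition is_path :: "complex set \<Rightarrow> complex list \<Rightarrow> bool" where
  "is_path P xs \<longleftrightarrow> xs \<noteq> [] \<and>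
     (\<forall>k. Suc k < length xs \<longrightarrow> half_theta6_edge P (xs ! k) (xs ! Suc k))"

definition path_len :: "complex list \<Rightarrow> real" where
  "path_len xs = (\<Sum>k<length xs - 1. dist (xs ! k) (xs ! Suc k))"

end

theory Submission
  imports Defs
begin

text \<open>Induction on the number of points of \<open>P\<close> in \<open>T_uw\<close>.  Let \<open>a\<close> be the point of the positive
  cone of \<open>u\<close> containing \<open>w\<close> whose projection on the bisector is nearest, so \<open>ua\<close> is an edge.
  In coordinates \<open>(X, Y)\<close> of \<open>w - u\<close> across and along the bisector the claimed bound is
  \<open>sqrt 3 * Y + \<bar>X\<bar>\<close>, and \<open>|ua| \<le> sqrt 3 * Y\<^sub>a - \<bar>X\<^sub>a\<bar>\<close>.  Either \<open>w\<close> lies in the same cone of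
  \<open>a\<close> and we recurse on \<open>T_aw\<close>, or \<open>a\<close> lies in one of the two adjacent positive cones of \<open>w\<close>
  and we recurse on \<open>T_wa\<close>.  In the second case no point of \<open>T_wa\<close> lies below \<open>a\<close>, so the
  positive cone of \<open>a\<close> on the far side is empty; this is why the induction carries the sharper
  bound \<open>sqrt 3 * Y \<mp> X\<close> for an empty side cone, which is exactly what makes the sums add up.\<close>

lemma bis_0: "bis 0 = \<i>"
  by (simp add: bis_def complex_eq_iff)

lemma bis_1: "bis 1 = Complex (- sqrt 3 / 2) (- 1 / 2)"
proof -
  have "pi/2 + 2*pi*real 1/3 = pi/6 + pi" by simp
  moreover have "cos (pi/6 + pi) = - sqrt 3 / 2" "sin (pi/6 + pi) = - 1 / 2"
    by (simp_all only: cos_periodic_pi sin_periodic_pi cos_30 sin_30)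
  ultimately show ?thesis by (simp add: bis_def complex_eq_iff)
qed

lemma bis_2: "bis 2 = Complex (sqrt 3 / 2) (- 1 / 2)"
proof -
  have "pi/2 + 2*pi*real 2/3 = - (pi/6) + 2*pi" by simp
  moreover have "cos (- (pi/6) + 2*pi) = sqrt 3 / 2" "sin (- (pi/6) + 2*pi) = - 1 / 2"
    by (simp_all only: cos_periodic sin_periodic cos_minus sin_minus cos_30 sin_30)
  ultimately show ?thesis by (simp add: bis_def complex_eq_iff)
qed

definition cone_y :: "nat \<Rightarrow> complex \<Rightarrow> real" where
  "cone_y i v = inner v (bis i)"

definition cone_x :: "nat \<Rightarrow> complex \<Rightarrow> real" where
  "cone_x i v = inner v (bis i * - \<i>)"

lemma cone_coords_0: "cone_x 0 v = Re v" "cone_y 0 v = Im v"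
  by (simp_all add: cone_x_def cone_y_def bis_0 inner_complex_def)

lemma cone_coords_1:
  "cone_x 1 v = - Re v / 2 + sqrt 3 / 2 * Im v" "cone_y 1 v = - sqrt 3 / 2 * Re v - Im v / 2"
  by (simp_all add: cone_x_def cone_y_def bis_1 [unfolded One_nat_def] inner_complex_def)

lemma cone_coords_2:
  "cone_x 2 v = - Re v / 2 - sqrt 3 / 2 * Im v" "cone_y 2 v = sqrt 3 / 2 * Re v - Im v / 2"
  by (simp_all add: cone_x_def cone_y_def bis_2 inner_complex_def)

lemmas cone_coords_explicit = cone_coords_0 cone_coords_1 cone_coords_2
  cone_coords_1 [unfolded One_nat_def] cone_coords_2 [unfolded numeral_2_eq_2]

lemma less_3_cases: "i < (3::nat) \<Longrightarrow> i = 0 \<or> i = 1 \<or> i = 2"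
  by auto

lemma cone_coords_diff: "cone_x i (a - b) = cone_x i a - cone_x i b" "cone_y i (a - b) = cone_y i a - cone_y i b"
  by (simp_all add: cone_x_def cone_y_def inner_diff_left)

lemma cone_coords_zero [simp]: "cone_x i 0 = 0" "cone_y i 0 = 0"
  by (simp_all add: cone_x_def cone_y_def)

lemma sqrt3_mult_sqrt3: "sqrt 3 * (sqrt 3 * x) = 3 * x"
  by (simp add: mult.assoc [symmetric])

lemma norm_cone_coords:
  assumes "i < 3"
  shows "norm v = sqrt ((cone_x i v)\<^sup>2 + (cone_y i v)\<^sup>2)"
proof -
  have "(cone_x i v)\<^sup>2 + (cone_y i v)\<^sup>2 = (Re v)\<^sup>2 + (Im v)\<^sup>2"
    using less_3_cases [OF assms]
    by (elim disjE) (simp_all add: cone_coords_explicit power2_eq_square algebra_simps)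
  then show ?thesis by (simp add: norm_complex_def)
qed

lemma cone_coords_next:
  assumes "i < 3"
  shows "cone_x ((i + 1) mod 3) v = - cone_x i v / 2 + sqrt 3 / 2 * cone_y i v"
    "cone_y ((i + 1) mod 3) v = - sqrt 3 / 2 * cone_x i v - cone_y i v / 2"
  using less_3_cases [OF assms]
  by (elim disjE; simp add: cone_coords_explicit field_simps)+

lemma cone_coords_prev:
  assumes "i < 3"
  shows "cone_x ((i + 2) mod 3) v = - cone_x i v / 2 - sqrt 3 / 2 * cone_y i v"
    "cone_y ((i + 2) mod 3) v = sqrt 3 / 2 * cone_x i v - cone_y i v / 2"
  using less_3_cases [OF assms]
  by (elim disjE; simp add: cone_coords_explicit field_simps)+

lemma less_iff_power2_less: "0 \<le> (a::real) \<Longrightarrow> a < y \<longleftrightarrow> 0 < y \<and> a\<^sup>2 < y\<^sup>2"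
  by (metis less_eq_real_def order.strict_trans pos2 power2_less_imp_less power_strict_mono)

lemma le_iff_power2_le: "0 \<le> (a::real) \<Longrightarrow> a \<le> y \<longleftrightarrow> 0 \<le> y \<and> a\<^sup>2 \<le> y\<^sup>2"
  by auto

lemma cone_sqrt_less_iff: "sqrt 3 / 2 * sqrt (x\<^sup>2 + y\<^sup>2) < y \<longleftrightarrow> sqrt 3 * \<bar>x\<bar> < (y::real)"
proof -
  have "(sqrt 3 / 2 * sqrt (x\<^sup>2 + y\<^sup>2))\<^sup>2 < y\<^sup>2 \<longleftrightarrow> (sqrt 3 * \<bar>x\<bar>)\<^sup>2 < y\<^sup>2"
    by (simp add: power_mult_distrib power_divide)
  moreover have "0 \<le> sqrt 3 / 2 * sqrt (x\<^sup>2 + y\<^sup>2)" "0 \<le> sqrt 3 * \<bar>x\<bar>"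
    by simp_all
  ultimately show ?thesis
    using less_iff_power2_less by blast
qed

lemma cone_sqrt_le_iff: "sqrt 3 / 2 * sqrt (x\<^sup>2 + y\<^sup>2) \<le> y \<longleftrightarrow> sqrt 3 * \<bar>x\<bar> \<le> (y::real)"
proof -
  have "(sqrt 3 / 2 * sqrt (x\<^sup>2 + y\<^sup>2))\<^sup>2 \<le> y\<^sup>2 \<longleftrightarrow> (sqrt 3 * \<bar>x\<bar>)\<^sup>2 \<le> y\<^sup>2"
    by (simp add: power_mult_distrib power_divide)
  moreover have "0 \<le> sqrt 3 / 2 * sqrt (x\<^sup>2 + y\<^sup>2)" "0 \<le> sqrt 3 * \<bar>x\<bar>"
    by simp_all
  ultimately show ?thesis
    using le_iff_power2_le by blast
qed

lemma in_pos_cone_iff_coords: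
  "in_pos_cone u i v \<longleftrightarrow> i < 3 \<and> sqrt 3 * \<bar>cone_x i (v - u)\<bar> < cone_y i (v - u)"
proof (cases "i < 3")
  case True
  have "v \<noteq> u" if "sqrt 3 * \<bar>cone_x i (v - u)\<bar> < cone_y i (v - u)"
    using that by auto
  then show ?thesis
    unfolding in_pos_cone_def norm_cone_coords [OF True] cone_y_def [symmetric] cone_sqrt_less_iff
    using True by blast
qed (simp add: in_pos_cone_def)

lemma canon_tri_iff_coords:
  assumes "i < 3"
  shows "x \<in> canon_tri u i v \<longleftrightarrow>
    sqrt 3 * \<bar>cone_x i (x - u)\<bar> \<le> cone_y i (x - u) \<and> cone_y i (x - u) \<le> cone_y i (v - u)"
  unfolding canon_tri_def norm_cone_coords [OF assms] cone_y_def [symmetric] cone_sqrt_le_iff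
  by simp

lemma gen_pos_directions:
  assumes "gen_pos P" "p \<in> P" "q \<in> P" "p \<noteq> q"
  shows "Im (q - p) \<noteq> 0" "Im (q - p) \<noteq> sqrt 3 * Re (q - p)" "Im (q - p) \<noteq> - sqrt 3 * Re (q - p)"
proof -
  let ?v = "q - p"
  have no_dir: "?v \<noteq> of_real t * cis (real_of_int k * pi / 3)" for k t
    using assms unfolding gen_pos_def by blast
  have cis_1: "cis (real_of_int 1 * pi / 3) = Complex (1 / 2) (sqrt 3 / 2)"
    by (simp add: complex_eq_iff cos_60 sin_60)
  have "cos (pi - pi / 3) = - 1 / 2" "sin (pi - pi / 3) = sqrt 3 / 2"
    by (simp_all only: cos_pi_minus sin_pi_minus cos_60 sin_60)
  moreover have "real_of_int 2 * pi / 3 = pi - pi / 3"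
    by simp
  ultimately have cis_2: "cis (real_of_int 2 * pi / 3) = Complex (- 1 / 2) (sqrt 3 / 2)"
    by (simp add: complex_eq_iff)
  show "Im ?v \<noteq> 0"
  proof
    assume "Im ?v = 0"
    then have "?v = of_real (Re ?v) * cis (real_of_int 0 * pi / 3)"
      by (simp add: complex_eq_iff)
    then show False using no_dir by blast
  qed
  show "Im ?v \<noteq> sqrt 3 * Re ?v"
  proof
    assume "Im ?v = sqrt 3 * Re ?v"
    then have "?v = of_real (2 * Re ?v) * cis (real_of_int 1 * pi / 3)"
      unfolding cis_1 by (simp add: complex_eq_iff)
    then show False using no_dir by blast
  qed
  show "Im ?v \<noteq> - sqrt 3 * Re ?v"
  proof
    assume "Im ?v = - sqrt 3 * Re ?v"
    then have "?v = of_real (- 2 * Re ?v) * cis (real_of_int 2 * pi / 3)"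
      unfolding cis_2 by (simp add: complex_eq_iff algebra_simps)
    then show False using no_dir by blast
  qed
qed

lemma gen_pos_in_pos_cone:
  assumes "gen_pos P" "u \<in> P" "p \<in> P" "p \<noteq> u" "i < 3"
    and closed: "sqrt 3 * \<bar>cone_x i (p - u)\<bar> \<le> cone_y i (p - u)"
  shows "in_pos_cone u i p"
proof -
  note dirs = gen_pos_directions [OF assms(1-3) assms(4) [symmetric]]
  have "cone_y i (p - u) \<noteq> sqrt 3 * cone_x i (p - u)" "cone_y i (p - u) \<noteq> - sqrt 3 * cone_x i (p - u)"
    using less_3_cases [OF \<open>i < 3\<close>] dirs
    by (elim disjE; simp add: cone_coords_explicit field_simps; smt (verit))+
  moreover have "\<bar>cone_x i (p - u)\<bar> = cone_x i (p - u) \<or> \<bar>cone_x i (p - u)\<bar> = - cone_x i (p - u)"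
    by linarith
  ultimately show ?thesis
    using closed \<open>i < 3\<close> by (auto simp: in_pos_cone_iff_coords)
qed

lemma sqrt3_abs_less_iff: "sqrt 3 * \<bar>z\<bar> < t \<longleftrightarrow> sqrt 3 * z < t \<and> - (sqrt 3 * z) < t"
  using abs_less_iff [of "sqrt 3 * z" t] by (simp add: abs_mult)

lemma sqrt3_abs_le_iff: "sqrt 3 * \<bar>z\<bar> \<le> t \<longleftrightarrow> sqrt 3 * z \<le> t \<and> - (sqrt 3 * z) \<le> t"
  using abs_le_iff [of "sqrt 3 * z" t] by (simp add: abs_mult)

lemma sqrt_le_in_cone:
  fixes x y :: real
  assumes "sqrt 3 * \<bar>x\<bar> < y"
  shows "sqrt (x\<^sup>2 + y\<^sup>2) \<le> sqrt 3 * y - \<bar>x\<bar>"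
proof -
  have "0 \<le> sqrt 3 * \<bar>x\<bar>" "\<bar>x\<bar> \<le> sqrt 3 * \<bar>x\<bar>"
    by (simp_all add: mult_right_mono [of 1 "sqrt 3" "\<bar>x\<bar>", simplified])
  then have "0 < y" "\<bar>x\<bar> \<le> y" "y \<le> sqrt 3 * y"
    using assms by (auto simp: mult_right_mono [of 1 "sqrt 3" y, simplified])
  then have rhs_nonneg: "0 \<le> sqrt 3 * y - \<bar>x\<bar>"
    by linarith
  have "sqrt 3 * \<bar>x\<bar> * y \<le> y * y"
    using assms \<open>0 < y\<close> by (simp add: mult_right_mono)
  then have "x\<^sup>2 + y\<^sup>2 \<le> (sqrt 3 * y - \<bar>x\<bar>)\<^sup>2"
    by (simp add: power2_eq_square algebra_simps sqrt3_mult_sqrt3)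
  then show ?thesis
    using rhs_nonneg real_le_lsqrt by blast
qed

lemma in_pos_cone_imp_cone_y_pos:
  assumes "in_pos_cone u i w"
  shows "0 < cone_y i (w - u)"
proof -
  have "0 \<le> sqrt 3 * \<bar>cone_x i (w - u)\<bar>"
    by simp
  then show ?thesis
    using assms unfolding in_pos_cone_iff_coords by linarith
qed

lemma dist_le_in_pos_cone:
  assumes "in_pos_cone u i a"
  shows "dist u a \<le> sqrt 3 * cone_y i (a - u) - \<bar>cone_x i (a - u)\<bar>"
proof -
  have "i < 3" "sqrt 3 * \<bar>cone_x i (a - u)\<bar> < cone_y i (a - u)"
    using assms by (simp_all add: in_pos_cone_iff_coords)
  then show ?thesis
    using sqrt_le_in_cone by (simp add: dist_norm norm_minus_commute norm_cone_coords)
qed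

lemma canon_tri_apex:
  assumes "in_pos_cone u i w"
  shows "u \<in> canon_tri u i w" "w \<in> canon_tri u i w"
proof -
  have i: "i < 3" and w: "sqrt 3 * \<bar>cone_x i (w - u)\<bar> < cone_y i (w - u)"
    using assms by (simp_all add: in_pos_cone_iff_coords)
  moreover have "0 \<le> cone_y i (w - u)"
    using in_pos_cone_imp_cone_y_pos [OF assms] by simp
  with i w show "u \<in> canon_tri u i w" "w \<in> canon_tri u i w"
    by (simp_all add: canon_tri_iff_coords)
qed

lemma canon_tri_subset_same_cone:
  assumes "in_pos_cone u i a"
  shows "canon_tri a i w \<subseteq> canon_tri u i w" "u \<notin> canon_tri a i w"
proof -
  have i: "i < 3" and a: "sqrt 3 * \<bar>cone_x i (a - u)\<bar> < cone_y i (a - u)"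
    using assms by (simp_all add: in_pos_cone_iff_coords)
  show "canon_tri a i w \<subseteq> canon_tri u i w"
  proof
    fix x assume "x \<in> canon_tri a i w"
    then have x: "sqrt 3 * \<bar>cone_x i (x - a)\<bar> \<le> cone_y i (x - a)" "cone_y i (x - a) \<le> cone_y i (w - a)"
      by (simp_all add: canon_tri_iff_coords [OF i])
    have sums: "cone_x i (x - u) = cone_x i (x - a) + cone_x i (a - u)"
      "cone_y i (x - u) = cone_y i (x - a) + cone_y i (a - u)"
      "cone_y i (w - u) = cone_y i (w - a) + cone_y i (a - u)"
      by (simp_all add: cone_coords_diff)
    have "\<bar>cone_x i (x - a) + cone_x i (a - u)\<bar> \<le> \<bar>cone_x i (x - a)\<bar> + \<bar>cone_x i (a - u)\<bar>"
      by (rule abs_triangle_ineq)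
    then have "sqrt 3 * \<bar>cone_x i (x - a) + cone_x i (a - u)\<bar> \<le>
        sqrt 3 * \<bar>cone_x i (x - a)\<bar> + sqrt 3 * \<bar>cone_x i (a - u)\<bar>"
      by (simp add: distrib_left [symmetric])
    then show "x \<in> canon_tri u i w"
      unfolding canon_tri_iff_coords [OF i] sums using x a by linarith
  qed
  show "u \<notin> canon_tri a i w"
  proof
    assume "u \<in> canon_tri a i w"
    then have "sqrt 3 * \<bar>cone_x i (a - u)\<bar> \<le> - cone_y i (a - u)"
      by (simp add: canon_tri_iff_coords [OF i] cone_coords_diff abs_minus_commute)
    moreover have "0 \<le> sqrt 3 * \<bar>cone_x i (a - u)\<bar>"
      by simp
    ultimately show False
      using a by linarith
  qed
qed

lemma canon_tri_subset_next_cone: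
  assumes ua: "in_pos_cone u i a" and uw: "in_pos_cone u i w"
  shows "canon_tri w ((i + 1) mod 3) a \<subseteq> canon_tri u i w" "u \<notin> canon_tri w ((i + 1) mod 3) a"
proof -
  let ?j = "(i + 1) mod 3"
  have i: "i < 3" and j: "?j < 3"
    using ua by (simp_all add: in_pos_cone_iff_coords)
  define X Y where "X = cone_x i (w - u)" and "Y = cone_y i (w - u)"
  define dx dy where "dx = cone_x i (w - a)" and "dy = cone_y i (w - a)"
  have w: "sqrt 3 * X < Y" "- (sqrt 3 * X) < Y"
    using uw by (simp_all add: in_pos_cone_iff_coords sqrt3_abs_less_iff X_def Y_def)
  have "cone_x i (a - u) = X - dx" "cone_y i (a - u) = Y - dy"
    by (simp_all add: X_def Y_def dx_def dy_def cone_coords_diff)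
  then have a: "- (sqrt 3 * (X - dx)) < Y - dy"
    using ua by (simp add: in_pos_cone_iff_coords sqrt3_abs_less_iff)
  have x_in: "sqrt 3 * \<bar>cone_x i (x - u)\<bar> \<le> cone_y i (x - u) \<and> cone_y i (x - u) \<le> Y
      \<and> sqrt 3 * cone_x i (x - w) \<le> cone_y i (x - w)"
    if "x \<in> canon_tri w ?j a" for x
  proof -
    define Dx Dy where "Dx = cone_x i (x - w)" and "Dy = cone_y i (x - w)"
    have "cone_x i (a - w) = - dx" "cone_y i (a - w) = - dy"
      by (simp_all add: dx_def dy_def cone_coords_diff)
    then have "sqrt 3 * \<bar>- Dx / 2 + sqrt 3 / 2 * Dy\<bar> \<le> - sqrt 3 / 2 * Dx - Dy / 2"
      "- sqrt 3 / 2 * Dx - Dy / 2 \<le> sqrt 3 / 2 * dx + dy / 2"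
      using that unfolding canon_tri_iff_coords [OF j] cone_coords_next [OF i] Dx_def Dy_def
      by simp_all
    then have "Dy \<le> 0" "sqrt 3 * Dx \<le> Dy" "- (sqrt 3 * dx + dy) \<le> sqrt 3 * Dx + Dy"
      unfolding sqrt3_abs_le_iff by (simp_all add: algebra_simps sqrt3_mult_sqrt3)
    moreover have "cone_x i (x - u) = X + Dx" "cone_y i (x - u) = Y + Dy"
      by (simp_all add: X_def Y_def Dx_def Dy_def cone_coords_diff)
    ultimately show ?thesis
      using w a unfolding sqrt3_abs_le_iff Dx_def [symmetric] Dy_def [symmetric]
      by (simp add: algebra_simps)
  qed
  then show "canon_tri w ?j a \<subseteq> canon_tri u i w"
    by (auto simp: canon_tri_iff_coords [OF i] Y_def)
  show "u \<notin> canon_tri w ?j a"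
  proof
    assume "u \<in> canon_tri w ?j a"
    then have "sqrt 3 * cone_x i (u - w) \<le> cone_y i (u - w)"
      using x_in by blast
    then show False
      using w by (simp add: X_def Y_def cone_coords_diff algebra_simps)
  qed
qed

lemma canon_tri_subset_prev_cone:
  assumes ua: "in_pos_cone u i a" and uw: "in_pos_cone u i w"
  shows "canon_tri w ((i + 2) mod 3) a \<subseteq> canon_tri u i w" "u \<notin> canon_tri w ((i + 2) mod 3) a"
proof -
  let ?j = "(i + 2) mod 3"
  have i: "i < 3" and j: "?j < 3"
    using ua by (simp_all add: in_pos_cone_iff_coords)
  define X Y where "X = cone_x i (w - u)" and "Y = cone_y i (w - u)"
  define dx dy where "dx = cone_x i (w - a)" and "dy = cone_y i (w - a)"
  have w: "sqrt 3 * X < Y" "- (sqrt 3 * X) < Y"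
    using uw by (simp_all add: in_pos_cone_iff_coords sqrt3_abs_less_iff X_def Y_def)
  have "cone_x i (a - u) = X - dx" "cone_y i (a - u) = Y - dy"
    by (simp_all add: X_def Y_def dx_def dy_def cone_coords_diff)
  then have a: "sqrt 3 * (X - dx) < Y - dy"
    using ua by (simp add: in_pos_cone_iff_coords sqrt3_abs_less_iff)
  have x_in: "sqrt 3 * \<bar>cone_x i (x - u)\<bar> \<le> cone_y i (x - u) \<and> cone_y i (x - u) \<le> Y
      \<and> - (sqrt 3 * cone_x i (x - w)) \<le> cone_y i (x - w)"
    if "x \<in> canon_tri w ?j a" for x
  proof -
    define Dx Dy where "Dx = cone_x i (x - w)" and "Dy = cone_y i (x - w)"
    have "cone_x i (a - w) = - dx" "cone_y i (a - w) = - dy"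
      by (simp_all add: dx_def dy_def cone_coords_diff)
    then have "sqrt 3 * \<bar>- Dx / 2 - sqrt 3 / 2 * Dy\<bar> \<le> sqrt 3 / 2 * Dx - Dy / 2"
      "sqrt 3 / 2 * Dx - Dy / 2 \<le> - sqrt 3 / 2 * dx + dy / 2"
      using that unfolding canon_tri_iff_coords [OF j] cone_coords_prev [OF i] Dx_def Dy_def
      by simp_all
    then have "Dy \<le> 0" "- (sqrt 3 * Dx) \<le> Dy" "sqrt 3 * dx - dy \<le> Dy - sqrt 3 * Dx"
      unfolding sqrt3_abs_le_iff by (simp_all add: algebra_simps sqrt3_mult_sqrt3)
    moreover have "cone_x i (x - u) = X + Dx" "cone_y i (x - u) = Y + Dy"
      by (simp_all add: X_def Y_def Dx_def Dy_def cone_coords_diff)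
    ultimately show ?thesis
      using w a unfolding sqrt3_abs_le_iff Dx_def [symmetric] Dy_def [symmetric]
      by (simp add: algebra_simps)
  qed
  then show "canon_tri w ?j a \<subseteq> canon_tri u i w"
    by (auto simp: canon_tri_iff_coords [OF i] Y_def)
  show "u \<notin> canon_tri w ?j a"
  proof
    assume "u \<in> canon_tri w ?j a"
    then have "- (sqrt 3 * cone_x i (u - w)) \<le> cone_y i (u - w)"
      using x_in by blast
    then show False
      using w by (simp add: X_def Y_def cone_coords_diff algebra_simps)
  qed
qed

lemma pos_cone_other_below:
  assumes "i < 3" "j < 3" "j \<noteq> i" "in_pos_cone a j p"
  shows "cone_y i (p - a) < 0"
proof -
  define X Y where "X = cone_x i (p - a)" and "Y = cone_y i (p - a)"
  have p: "sqrt 3 * \<bar>cone_x j (p - a)\<bar> < cone_y j (p - a)"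
    using assms(4) by (simp add: in_pos_cone_iff_coords)
  show ?thesis
  proof (cases "j = (i + 1) mod 3")
    case True
    from p have "sqrt 3 * (- X / 2 + sqrt 3 / 2 * Y) < - sqrt 3 / 2 * X - Y / 2"
      unfolding True sqrt3_abs_less_iff cone_coords_next [OF assms(1)] X_def Y_def by blast
    then show ?thesis
      by (simp add: Y_def [symmetric] algebra_simps sqrt3_mult_sqrt3)
  next
    case False
    then have j: "j = (i + 2) mod 3"
      using assms(1-3) by presburger
    from p have "- (sqrt 3 * (- X / 2 - sqrt 3 / 2 * Y)) < sqrt 3 / 2 * X - Y / 2"
      unfolding j sqrt3_abs_less_iff cone_coords_prev [OF assms(1)] X_def Y_def by blast
    then show ?thesis
      by (simp add: Y_def [symmetric] algebra_simps sqrt3_mult_sqrt3)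
  qed
qed

lemma gen_pos_cone_cases:
  assumes "gen_pos P" "a \<in> P" "w \<in> P" "a \<noteq> w" "i < 3" "0 \<le> cone_y i (w - a)"
  obtains "in_pos_cone a i w" | "in_pos_cone w ((i + 1) mod 3) a" | "in_pos_cone w ((i + 2) mod 3) a"
proof -
  define dx dy where "dx = cone_x i (w - a)" and "dy = cone_y i (w - a)"
  have dy: "0 < dy" "dy \<noteq> sqrt 3 * dx" "dy \<noteq> - sqrt 3 * dx"
    using assms(6) gen_pos_directions [OF assms(1-4)] less_3_cases [OF assms(5)]
    unfolding dx_def dy_def
    by (auto simp: cone_coords_explicit field_simps)
  have a_w: "cone_x i (a - w) = - dx" "cone_y i (a - w) = - dy"
    by (simp_all add: dx_def dy_def cone_coords_diff)
  consider "sqrt 3 * \<bar>dx\<bar> < dy" | "0 < dx" "dy < sqrt 3 * dx" | "dx < 0" "dy < - sqrt 3 * dx"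
  proof (cases "0 \<le> dx")
    case True
    show ?thesis
    proof (cases "sqrt 3 * dx < dy")
      case False
      then have "dy < sqrt 3 * dx"
        using dy(2) by linarith
      moreover from this have "0 < sqrt 3 * dx"
        using dy(1) by linarith
      then have "0 < dx"
        by (simp add: zero_less_mult_iff)
      ultimately show ?thesis
        using that(2) by blast
    qed (use True that(1) in simp)
  next
    case False
    show ?thesis
    proof (cases "- (sqrt 3 * dx) < dy")
      case False
      then have "dy < - sqrt 3 * dx"
        using dy(3) by linarith
      moreover from this have "sqrt 3 * dx < 0"
        using dy(1) by linarith
      then have "dx < 0"
        by (simp add: mult_less_0_iff)
      ultimately show ?thesis
        using that(3) by blast
    qed (use False that(1) in simp)
  qed
  then show thesis
  proof cases
    case 1
    then show thesis
      using that(1) assms(5) by (simp add: in_pos_cone_iff_coords dx_def dy_def)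
  next
    case 2
    have "sqrt 3 * (dx / 2 - sqrt 3 / 2 * dy) < sqrt 3 / 2 * dx + dy / 2"
      "- (sqrt 3 * (dx / 2 - sqrt 3 / 2 * dy)) < sqrt 3 / 2 * dx + dy / 2"
      using 2 dy(1) by (simp_all add: algebra_simps sqrt3_mult_sqrt3)
    then have "in_pos_cone w ((i + 1) mod 3) a"
      unfolding in_pos_cone_iff_coords cone_coords_next [OF assms(5)] a_w sqrt3_abs_less_iff
      by simp
    then show thesis
      using that(2) by blast
  next
    case 3
    have "sqrt 3 * (dx / 2 + sqrt 3 / 2 * dy) < - sqrt 3 / 2 * dx + dy / 2"
      "- (sqrt 3 * (dx / 2 + sqrt 3 / 2 * dy)) < - sqrt 3 / 2 * dx + dy / 2"
      using 3 dy(1) by (simp_all add: algebra_simps sqrt3_mult_sqrt3)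
    then have "in_pos_cone w ((i + 2) mod 3) a"
      unfolding in_pos_cone_iff_coords cone_coords_prev [OF assms(5)] a_w sqrt3_abs_less_iff
      by simp
    then show thesis
      using that(3) by blast
  qed
qed

lemma is_path_Cons_Cons:
  "is_path P (x # y # zs) \<longleftrightarrow> half_theta6_edge P x y \<and> is_path P (y # zs)"
proof
  assume path: "is_path P (x # y # zs)"
  have "Suc 0 < length (x # y # zs)"
    by simp
  then have "half_theta6_edge P ((x # y # zs) ! 0) ((x # y # zs) ! Suc 0)"
    using path unfolding is_path_def by blast
  then have "half_theta6_edge P x y"
    by simp
  moreover have "is_path P (y # zs)"
    unfolding is_path_def
  proof (intro conjI allI impI)
    fix k assume "Suc k < length (y # zs)"
    then have "Suc (Suc k) < length (x # y # zs)"
      by simp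
    then have "half_theta6_edge P ((x # y # zs) ! Suc k) ((x # y # zs) ! Suc (Suc k))"
      using path unfolding is_path_def by blast
    then show "half_theta6_edge P ((y # zs) ! k) ((y # zs) ! Suc k)"
      by simp
  qed simp
  ultimately show "half_theta6_edge P x y \<and> is_path P (y # zs)" ..
next
  assume edges: "half_theta6_edge P x y \<and> is_path P (y # zs)"
  show "is_path P (x # y # zs)"
    unfolding is_path_def
  proof (intro conjI allI impI)
    fix k assume k: "Suc k < length (x # y # zs)"
    show "half_theta6_edge P ((x # y # zs) ! k) ((x # y # zs) ! Suc k)"
    proof (cases k)
      case (Suc m)
      then have "Suc m < length (y # zs)"
        using k by simp
      then have "half_theta6_edge P ((y # zs) ! m) ((y # zs) ! Suc m)"
        using edges unfolding is_path_def by blast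
      then show ?thesis
        using Suc by simp
    qed (use edges in simp)
  qed simp
qed

lemma path_len_Cons_Cons: "path_len (x # y # zs) = dist x y + path_len (y # zs)"
  unfolding path_len_def by (simp add: sum.lessThan_Suc_shift del: sum.lessThan_Suc)

lemma is_path_rev:
  assumes "is_path P xs"
  shows "is_path P (rev xs)"
  unfolding is_path_def
proof (intro conjI allI impI)
  show "rev xs \<noteq> []"
    using assms by (simp add: is_path_def)
  fix k assume k: "Suc k < length (rev xs)"
  define m where "m = length xs - Suc (Suc k)"
  have m: "Suc m < length xs" "length xs - Suc k = Suc m"
    using k by (auto simp: m_def)
  then have "half_theta6_edge P (xs ! m) (xs ! Suc m)"
    using assms unfolding is_path_def by blast
  then have "half_theta6_edge P (xs ! Suc m) (xs ! m)"
    by (auto simp: half_theta6_edge_def)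
  moreover have "rev xs ! k = xs ! Suc m" "rev xs ! Suc k = xs ! m"
    using k m by (simp_all add: rev_nth m_def)
  ultimately show "half_theta6_edge P (rev xs ! k) (rev xs ! Suc k)"
    by simp
qed

lemma path_len_rev: "path_len (rev xs) = path_len xs"
proof -
  define n where "n = length xs - 1"
  define d where "d j = dist (xs ! j) (xs ! Suc j)" for j
  have "path_len (rev xs) = (\<Sum>k<n. dist (rev xs ! k) (rev xs ! Suc k))"
    by (simp add: path_len_def n_def)
  also have "\<dots> = (\<Sum>k<n. d (n - Suc k))"
  proof (rule sum.cong [OF refl])
    fix k assume "k \<in> {..<n}"
    then have "rev xs ! k = xs ! Suc (n - Suc k)" "rev xs ! Suc k = xs ! (n - Suc k)"
      by (auto simp: rev_nth n_def Suc_diff_Suc)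
    then show "dist (rev xs ! k) (rev xs ! Suc k) = d (n - Suc k)"
      by (simp add: d_def dist_commute)
  qed
  also have "\<dots> = (\<Sum>k<n. d k)"
    by (rule sum.nat_diff_reindex)
  finally show ?thesis
    by (simp add: path_len_def n_def d_def)
qed

definition path_within :: "complex set \<Rightarrow> complex set \<Rightarrow> complex \<Rightarrow> complex \<Rightarrow> real \<Rightarrow> bool" where
  "path_within P S u w L \<longleftrightarrow>
     (\<exists>xs. is_path P xs \<and> hd xs = u \<and> last xs = w \<and> set xs \<subseteq> S \<and> path_len xs \<le> L)"

lemma path_within_commute:
  assumes "path_within P S w u L"
  shows "path_within P S u w L"
proof -
  obtain xs where xs: "is_path P xs" "hd xs = w" "last xs = u" "set xs \<subseteq> S" "path_len xs \<le> L"
    using assms unfolding path_within_def by blast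
  then have "xs \<noteq> []"
    by (simp add: is_path_def)
  with xs show ?thesis
    unfolding path_within_def
    by (intro exI [of _ "rev xs"]) (simp add: is_path_rev path_len_rev hd_rev last_rev)
qed

lemma path_within_edge:
  assumes "half_theta6_edge P u w" "u \<in> S" "w \<in> S" "dist u w \<le> L"
  shows "path_within P S u w L"
proof -
  have "is_path P [u, w]"
    using assms(1) by (simp add: is_path_def less_Suc_eq)
  moreover have "path_len [u, w] = dist u w"
    by (simp add: path_len_def)
  ultimately show ?thesis
    using assms(2-4) unfolding path_within_def by (intro exI [of _ "[u, w]"]) simp
qed

lemma path_within_Cons:
  assumes "path_within P S a w L" "half_theta6_edge P u a" "S \<subseteq> S'" "u \<in> S'" "dist u a + L \<le> L'"
  shows "path_within P S' u w L'"
proof -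
  obtain xs where xs: "is_path P xs" "hd xs = a" "last xs = w" "set xs \<subseteq> S" "path_len xs \<le> L"
    using assms(1) unfolding path_within_def by blast
  then obtain zs where zs: "xs = a # zs"
    by (cases xs) (auto simp: is_path_def)
  have "is_path P (u # xs)"
    using xs(1) assms(2) by (simp add: zs is_path_Cons_Cons)
  moreover have "path_len (u # xs) \<le> L'"
    using xs(5) assms(5) by (simp add: zs path_len_Cons_Cons)
  moreover have "hd (u # xs) = u" "last (u # xs) = w" "set (u # xs) \<subseteq> S'"
    using xs(3,4) assms(3,4) zs by auto
  ultimately show ?thesis
    unfolding path_within_def by blast
qed

definition empty_pos_cone :: "complex set \<Rightarrow> complex set \<Rightarrow> complex \<Rightarrow> nat \<Rightarrow> bool" where
  "empty_pos_cone P S w j \<longleftrightarrow> (\<forall>p \<in> P \<inter> S. \<not> in_pos_cone w j p)"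

definition short_paths :: "complex set \<Rightarrow> complex \<Rightarrow> complex \<Rightarrow> nat \<Rightarrow> bool" where
  "short_paths P u w i \<longleftrightarrow>
     path_within P (canon_tri u i w) u w (sqrt 3 * cone_y i (w - u) + \<bar>cone_x i (w - u)\<bar>) \<and>
     (empty_pos_cone P (canon_tri u i w) w ((i + 1) mod 3) \<longrightarrow>
        path_within P (canon_tri u i w) u w (sqrt 3 * cone_y i (w - u) - cone_x i (w - u))) \<and>
     (empty_pos_cone P (canon_tri u i w) w ((i + 2) mod 3) \<longrightarrow>
        path_within P (canon_tri u i w) u w (sqrt 3 * cone_y i (w - u) + cone_x i (w - u)))"

lemma short_paths_edge:
  assumes "in_pos_cone u i w" "half_theta6_edge P u w"
  shows "short_paths P u w i"
proof -
  have "dist u w \<le> sqrt 3 * cone_y i (w - u) - \<bar>cone_x i (w - u)\<bar>"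
    using assms(1) by (rule dist_le_in_pos_cone)
  moreover have "\<bar>cone_x i (w - u)\<bar> \<ge> cone_x i (w - u)" "\<bar>cone_x i (w - u)\<bar> \<ge> - cone_x i (w - u)"
    by simp_all
  ultimately show ?thesis
    unfolding short_paths_def
    using path_within_edge [OF assms(2) canon_tri_apex [OF assms(1)]] by simp
qed

lemma short_paths_step_same_cone:
  assumes ua: "in_pos_cone u i a" and aw: "in_pos_cone a i w" and uw: "in_pos_cone u i w"
    and edge: "half_theta6_edge P u a" and IH: "short_paths P a w i"
  shows "short_paths P u w i"
proof -
  define ax ay dx dy where "ax = cone_x i (a - u)" and "ay = cone_y i (a - u)"
    and "dx = cone_x i (w - a)" and "dy = cone_y i (w - a)"
  have sums: "cone_x i (w - u) = ax + dx" "sqrt 3 * cone_y i (w - u) = sqrt 3 * ay + sqrt 3 * dy"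
    by (simp_all add: ax_def ay_def dx_def dy_def cone_coords_diff distrib_left [symmetric])
  have "dist u a \<le> sqrt 3 * ay - \<bar>ax\<bar>"
    unfolding ax_def ay_def using ua by (rule dist_le_in_pos_cone)
  moreover have "\<bar>ax + dx\<bar> \<le> \<bar>ax\<bar> + \<bar>dx\<bar>" "ax \<le> \<bar>ax\<bar>" "- ax \<le> \<bar>ax\<bar>"
    by simp_all
  ultimately have bounds: "dist u a + (sqrt 3 * dy + \<bar>dx\<bar>) \<le> sqrt 3 * ay + sqrt 3 * dy + \<bar>ax + dx\<bar>"
    "dist u a + (sqrt 3 * dy - dx) \<le> sqrt 3 * ay + sqrt 3 * dy - (ax + dx)"
    "dist u a + (sqrt 3 * dy + dx) \<le> sqrt 3 * ay + sqrt 3 * dy + (ax + dx)"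
    by linarith+
  note sub = canon_tri_subset_same_cone [OF ua, of w]
  have "empty_pos_cone P (canon_tri a i w) w j" if "empty_pos_cone P (canon_tri u i w) w j" for j
    using that sub(1) unfolding empty_pos_cone_def by blast
  then show ?thesis
    using IH path_within_Cons [OF _ edge sub(1) canon_tri_apex(1) [OF uw]] bounds
    unfolding short_paths_def sums dx_def dy_def by blast
qed

lemma short_paths_step_next_cone:
  assumes ua: "in_pos_cone u i a" and uw: "in_pos_cone u i w" and wa: "in_pos_cone w ((i + 1) mod 3) a"
    and "a \<in> P" and edge: "half_theta6_edge P u a" and IH: "short_paths P w a ((i + 1) mod 3)"
    and empty: "empty_pos_cone P (canon_tri w ((i + 1) mod 3) a) a ((i + 2) mod 3)"
  shows "short_paths P u w i"
proof -
  let ?j = "(i + 1) mod 3" and ?T = "canon_tri u i w"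
  have i: "i < 3"
    using ua by (simp add: in_pos_cone_iff_coords)
  define X ax dx dy where "X = cone_x i (w - u)" and "ax = cone_x i (a - u)"
    and "dx = cone_x i (w - a)" and "dy = cone_y i (w - a)"
  have sums: "X = ax + dx" "sqrt 3 * cone_y i (w - u) = sqrt 3 * cone_y i (a - u) + sqrt 3 * dy"
    by (simp_all add: X_def ax_def dx_def dy_def cone_coords_diff distrib_left [symmetric])
  have "cone_x i (a - w) = - dx" "cone_y i (a - w) = - dy"
    by (simp_all add: dx_def dy_def cone_coords_diff)
  then have len: "sqrt 3 * cone_y ?j (a - w) - cone_x ?j (a - w) = dx + sqrt 3 * dy"
    unfolding cone_coords_next [OF i] by (simp add: algebra_simps sqrt3_mult_sqrt3)
  have j_succ: "(?j + 1) mod 3 = (i + 2) mod 3"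
    by presburger
  have "path_within P (canon_tri w ?j a) a w (dx + sqrt 3 * dy)"
    using IH empty unfolding short_paths_def len j_succ by (blast intro: path_within_commute)
  moreover have "dist u a \<le> sqrt 3 * cone_y i (a - u) - \<bar>ax\<bar>"
    unfolding ax_def using ua by (rule dist_le_in_pos_cone)
  then have "dist u a + (dx + sqrt 3 * dy) \<le> sqrt 3 * cone_y i (w - u) + X"
    "dist u a + (dx + sqrt 3 * dy) \<le> sqrt 3 * cone_y i (w - u) + \<bar>X\<bar>"
    unfolding sums using abs_ge_self [of ax] abs_ge_minus_self [of ax] abs_ge_self [of "ax + dx"]
      abs_ge_minus_self [of "ax + dx"] by linarith+
  moreover note sub = canon_tri_subset_next_cone [OF ua uw]
  moreover have "a \<in> ?T"
    using sub(1) canon_tri_apex(2) [OF wa] by blast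
  then have "\<not> empty_pos_cone P ?T w ?j"
    using \<open>a \<in> P\<close> wa unfolding empty_pos_cone_def by blast
  ultimately show ?thesis
    using path_within_Cons [OF _ edge sub(1) canon_tri_apex(1) [OF uw]]
    unfolding short_paths_def X_def by blast
qed

lemma short_paths_step_prev_cone:
  assumes ua: "in_pos_cone u i a" and uw: "in_pos_cone u i w" and wa: "in_pos_cone w ((i + 2) mod 3) a"
    and "a \<in> P" and edge: "half_theta6_edge P u a" and IH: "short_paths P w a ((i + 2) mod 3)"
    and empty: "empty_pos_cone P (canon_tri w ((i + 2) mod 3) a) a ((i + 1) mod 3)"
  shows "short_paths P u w i"
proof -
  let ?j = "(i + 2) mod 3" and ?T = "canon_tri u i w"
  have i: "i < 3"
    using ua by (simp add: in_pos_cone_iff_coords)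
  define X ax dx dy where "X = cone_x i (w - u)" and "ax = cone_x i (a - u)"
    and "dx = cone_x i (w - a)" and "dy = cone_y i (w - a)"
  have sums: "X = ax + dx" "sqrt 3 * cone_y i (w - u) = sqrt 3 * cone_y i (a - u) + sqrt 3 * dy"
    by (simp_all add: X_def ax_def dx_def dy_def cone_coords_diff distrib_left [symmetric])
  have "cone_x i (a - w) = - dx" "cone_y i (a - w) = - dy"
    by (simp_all add: dx_def dy_def cone_coords_diff)
  then have len: "sqrt 3 * cone_y ?j (a - w) + cone_x ?j (a - w) = - dx + sqrt 3 * dy"
    unfolding cone_coords_prev [OF i] by (simp add: algebra_simps sqrt3_mult_sqrt3)
  have j_succ: "(?j + 2) mod 3 = (i + 1) mod 3"
    by presburger
  have "path_within P (canon_tri w ?j a) a w (- dx + sqrt 3 * dy)"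
    using IH empty unfolding short_paths_def len j_succ by (blast intro: path_within_commute)
  moreover have "dist u a \<le> sqrt 3 * cone_y i (a - u) - \<bar>ax\<bar>"
    unfolding ax_def using ua by (rule dist_le_in_pos_cone)
  then have "dist u a + (- dx + sqrt 3 * dy) \<le> sqrt 3 * cone_y i (w - u) - X"
    "dist u a + (- dx + sqrt 3 * dy) \<le> sqrt 3 * cone_y i (w - u) + \<bar>X\<bar>"
    unfolding sums using abs_ge_self [of ax] abs_ge_minus_self [of ax] abs_ge_self [of "ax + dx"]
      abs_ge_minus_self [of "ax + dx"] by linarith+
  moreover note sub = canon_tri_subset_prev_cone [OF ua uw]
  moreover have "a \<in> ?T"
    using sub(1) canon_tri_apex(2) [OF wa] by blast
  then have "\<not> empty_pos_cone P ?T w ?j"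
    using \<open>a \<in> P\<close> wa unfolding empty_pos_cone_def by blast
  ultimately show ?thesis
    using path_within_Cons [OF _ edge sub(1) canon_tri_apex(1) [OF uw]]
    unfolding short_paths_def X_def by blast
qed

lemma nearest_in_pos_cone:
  assumes "finite P" "u \<in> P" "w \<in> P" "in_pos_cone u i w"
  obtains a where "a \<in> P" "in_pos_cone u i a" "half_theta6_edge P u a"
    "\<forall>p \<in> P. in_pos_cone u i p \<longrightarrow> cone_y i (a - u) \<le> cone_y i (p - u)"
proof -
  let ?C = "{p \<in> P. in_pos_cone u i p}"
  obtain a where "is_arg_min (\<lambda>p. cone_y i (p - u)) (\<lambda>p. p \<in> ?C) a"
    using ex_is_arg_min_if_finite [of ?C "\<lambda>p. cone_y i (p - u)"] assms by auto
  then have a: "a \<in> P" "in_pos_cone u i a"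
    and nearest: "\<forall>p \<in> P. in_pos_cone u i p \<longrightarrow> cone_y i (a - u) \<le> cone_y i (p - u)"
    unfolding is_arg_min_def by (auto simp: not_less)
  moreover have "half_theta6_edge P u a"
    using a nearest assms(2) unfolding half_theta6_edge_def half_theta6_dedge_def cone_y_def
    by (auto simp: in_pos_cone_def)
  ultimately show thesis
    using that by blast
qed

lemma nearest_in_pos_cone_lowest:
  assumes "gen_pos P" "u \<in> P" "i < 3"
    and nearest: "\<forall>q \<in> P. in_pos_cone u i q \<longrightarrow> cone_y i (a - u) \<le> cone_y i (q - u)"
    and "p \<in> P" "p \<in> canon_tri u i w" "p \<noteq> u"
  shows "0 \<le> cone_y i (p - a)"
proof -
  have "in_pos_cone u i p"
    using gen_pos_in_pos_cone [OF assms(1,2,5,7,3)] assms(6) by (simp add: canon_tri_iff_coords [OF assms(3)])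
  then show ?thesis
    using nearest assms(5) by (force simp: cone_coords_diff)
qed

lemma empty_pos_cone_if_above:
  assumes "i < 3" "j < 3" "j \<noteq> i" "\<forall>p \<in> P \<inter> S. 0 \<le> cone_y i (p - a)"
  shows "empty_pos_cone P S a j"
  using assms pos_cone_other_below unfolding empty_pos_cone_def by force

lemma short_paths_exist:
  assumes fin: "finite P" and gp: "gen_pos P"
  shows "u \<in> P \<Longrightarrow> w \<in> P \<Longrightarrow> in_pos_cone u i w \<Longrightarrow> short_paths P u w i"
proof (induction "card (P \<inter> canon_tri u i w)" arbitrary: u w i rule: less_induct)
  case less
  note uP = less.prems(1) and wP = less.prems(2) and uw = less.prems(3)
  have i: "i < 3"
    using uw by (simp add: in_pos_cone_iff_coords)
  obtain a where aP: "a \<in> P" and ua: "in_pos_cone u i a" and edge: "half_theta6_edge P u a"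
    and nearest: "\<forall>p \<in> P. in_pos_cone u i p \<longrightarrow> cone_y i (a - u) \<le> cone_y i (p - u)"
    using nearest_in_pos_cone [OF fin uP wP uw] by blast
  have smaller: "card (P \<inter> S) < card (P \<inter> canon_tri u i w)" if "S \<subseteq> canon_tri u i w" "u \<notin> S" for S
    using that fin uP canon_tri_apex(1) [OF uw] by (intro psubset_card_mono) auto
  have above_a: "\<forall>p \<in> P \<inter> S. 0 \<le> cone_y i (p - a)" if "S \<subseteq> canon_tri u i w" "u \<notin> S" for S
    using that nearest_in_pos_cone_lowest [OF gp uP i nearest] by blast
  show ?case
  proof (cases "a = w")
    case True
    then show ?thesis
      using short_paths_edge uw edge by blast
  next
    case False
    have "w \<noteq> u"
      using uw by (simp add: in_pos_cone_def)
    then have "0 \<le> cone_y i (w - a)"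
      using nearest_in_pos_cone_lowest [OF gp uP i nearest wP canon_tri_apex(2) [OF uw]] by blast
    then consider "in_pos_cone a i w" | "in_pos_cone w ((i + 1) mod 3) a" | "in_pos_cone w ((i + 2) mod 3) a"
      using gen_pos_cone_cases [OF gp aP wP False i] by blast
    then show ?thesis
    proof cases
      case 1
      note sub = canon_tri_subset_same_cone [OF ua, of w]
      show ?thesis
        using less.hyps [OF smaller [OF sub] aP wP 1] short_paths_step_same_cone [OF ua 1 uw edge]
        by blast
    next
      case 2
      note sub = canon_tri_subset_next_cone [OF ua uw]
      have "(i + 2) mod 3 < 3" "(i + 2) mod 3 \<noteq> i"
        using i by presburger+
      then show ?thesis
        using less.hyps [OF smaller [OF sub] wP aP 2] empty_pos_cone_if_above [OF i _ _ above_a [OF sub]]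
          short_paths_step_next_cone [OF ua uw 2 aP edge] by blast
    next
      case 3
      note sub = canon_tri_subset_prev_cone [OF ua uw]
      have "(i + 1) mod 3 < 3" "(i + 1) mod 3 \<noteq> i"
        using i by presburger+
      then show ?thesis
        using less.hyps [OF smaller [OF sub] wP aP 3] empty_pos_cone_if_above [OF i _ _ above_a [OF sub]]
          short_paths_step_prev_cone [OF ua uw 3 aP edge] by blast
    qed
  qed
qed

lemma seg_angle_opp_mid:
  assumes "in_pos_cone u i w"
  shows "seg_angle u w (opp_mid u i w) = arccos (cone_y i (w - u) / dist u w)"
proof -
  define Y where "Y = cone_y i (w - u)"
  have "0 < Y"
    using in_pos_cone_imp_cone_y_pos [OF assms] by (simp add: Y_def)
  have m: "opp_mid u i w - u = Y *\<^sub>R bis i"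
    by (simp add: opp_mid_def Y_def cone_y_def scaleR_conv_of_real)
  have "inner (w - u) (opp_mid u i w - u) = Y * Y"
    unfolding m by (simp add: Y_def cone_y_def)
  moreover have "norm (opp_mid u i w - u) = Y"
    unfolding m using \<open>0 < Y\<close> by (simp add: bis_def)
  ultimately show ?thesis
    unfolding seg_angle_def Y_def [symmetric] using \<open>0 < Y\<close>
    by (simp add: dist_norm norm_minus_commute)
qed

lemma stretch_bound_eq_cone_coords:
  assumes "in_pos_cone u i w"
  shows "(sqrt 3 * cos (seg_angle u w (opp_mid u i w)) + sin (seg_angle u w (opp_mid u i w))) * dist u w
    = sqrt 3 * cone_y i (w - u) + \<bar>cone_x i (w - u)\<bar>"
proof -
  define X Y r where "X = cone_x i (w - u)" and "Y = cone_y i (w - u)" and "r = dist u w"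
  have i: "i < 3"
    using assms by (simp add: in_pos_cone_iff_coords)
  have "0 < Y"
    using in_pos_cone_imp_cone_y_pos [OF assms] by (simp add: Y_def)
  have "r = norm (w - u)"
    by (simp add: r_def dist_norm norm_minus_commute)
  then have r: "r = sqrt (X\<^sup>2 + Y\<^sup>2)"
    using norm_cone_coords [OF i] by (simp add: X_def Y_def)
  then have "Y \<le> r"
    by (simp add: real_le_rsqrt)
  with \<open>0 < Y\<close> have "0 < r" "\<bar>Y / r\<bar> \<le> 1"
    by simp_all
  have angle: "seg_angle u w (opp_mid u i w) = arccos (Y / r)"
    using seg_angle_opp_mid [OF assms] by (simp add: Y_def r_def)
  have "cos (arccos (Y / r)) = Y / r"
    using \<open>\<bar>Y / r\<bar> \<le> 1\<close> by (simp add: cos_arccos_abs)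
  moreover have "1 - (Y / r)\<^sup>2 = (r\<^sup>2 - Y\<^sup>2) / r\<^sup>2"
    using \<open>0 < r\<close> by (simp add: power_divide diff_divide_distrib)
  then have "1 - (Y / r)\<^sup>2 = X\<^sup>2 / r\<^sup>2"
    using r by simp
  then have "1 - (Y / r)\<^sup>2 = (\<bar>X\<bar> / r)\<^sup>2"
    by (simp add: power_divide)
  then have "sin (arccos (Y / r)) = \<bar>X\<bar> / r"
    using sin_arccos_abs [OF \<open>\<bar>Y / r\<bar> \<le> 1\<close>] \<open>0 < r\<close> by simp
  ultimately show ?thesis
    unfolding angle X_def [symmetric] Y_def [symmetric] r_def [symmetric]
    using \<open>0 < r\<close> by (simp add: field_simps)
qed

theorem theorem1:
  fixes P :: "complex set" and u w :: complex and i :: nat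
  assumes "finite P" and "gen_pos P"
    and "u \<in> P" and "w \<in> P"
    and "in_pos_cone u i w"
  shows "\<exists>xs. is_path P xs \<and> hd xs = u \<and> last xs = w \<and>
           set xs \<subseteq> canon_tri u i w \<and>
           path_len xs \<le> (sqrt 3 * cos (seg_angle u w (opp_mid u i w))
                           + sin (seg_angle u w (opp_mid u i w))) * dist u w"
proof -
  have "short_paths P u w i"
    using short_paths_exist assms by blast
  then have "path_within P (canon_tri u i w) u w (sqrt 3 * cone_y i (w - u) + \<bar>cone_x i (w - u)\<bar>)"
    unfolding short_paths_def by blast
  then show ?thesis
    unfolding path_within_def stretch_bound_eq_cone_coords [OF assms(5)] .
qed

end
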